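(* Let $G=(V,E)$ be a finite, simple, connected, undirected graph with vertices $v_1,\dots,v_n$, adjacency matrix $\mathbf{A}$, degree vector $\mathbf{d}=\mathbf{A}\mathbf{1}$, degree matrix $\mathbf{D}=\mathrm{diag}(\mathbf{d})$, and lazy random walk matrix $\mathbf{P}=\tfrac12(\mathbf{I}+\mathbf{A}\mathbf{D}^{-1})$. Fix a vertex $v\in V$, a non-negative signal $\mathbf{x}\in\mathbb{R}^n$ (all entries $\ge 0$), a constant $c>1$, a positive integer $N$, and $\epsilon>0$. Then there exists $K\in\mathbb{N}$ such that the following holds. Let $\mathcal{F}=\mathcal{F}_{\mathrm{A}}\sqcup\mathcal{F}_{\mathrm{C}}$ be any finite, non-empty filter bank (non-decoupled architecture) in which every aggregation filter $f\in\mathcal{F}_{\mathrm{A}}$ is of the form $F_k(\mathbf{x})=\mathbf{P}^k\mathbf{x}$ with $k\ge K$, every comparison filter $f\in\mathcal{F}_{\mathrm{C}}$ is of the form $F_{k_1,k_2}(\mathbf{x})=(\mathbf{P}^{k_1}-\mathbf{P}^{k_2})\mathbf{x}$ with $k_1\neq k_2$ and $k_1,k_2\ge K$, and $|\mathcal{F}_{\mathrm{C}}|\le N$; write $\mathbf{h}_f=f(\mathbf{x})\in\mathbb{R}^n$. Let $(\bar{\mathbf{s}}_f[v])_{f\in\mathcal{F}}$ be any non-negative attention weights at $v$ such that the representation is $c$-band-dominant at $v$, i.e. $$\max\{\bar{\mathbf{s}}_f[v]: f\in\mathcal{F}_{\mathrm{C}}\}=c\cdot\max\{\bar{\mathbf{s}}_f[v]: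 f\in\mathcal{F}_{\mathrm{A}}\}.$$ Then $$\sum_{f\in\mathcal{F}_{\mathrm{C}}}\bar{\mathbf{s}}_f[v]\,\mathbf{h}_f[v]\;\le\;\epsilon\, c\sum_{f\in\mathcal{F}_{\mathrm{A}}}\bar{\mathbf{s}}_f[v]\,\mathbf{h}_f[v].$$
   Context: In the "non-decoupled architecture" the filter responses are taken without any learned transformation (the map applied after filtering is the identity), and a single set of normalized attention weights $\bar{\mathbf{s}}_f[v]$ (e.g. a softmax over the whole filter bank, hence non-negative) is assigned at each vertex to all filters in $\mathcal{F}=\mathcal{F}_{\mathrm{A}}\sqcup\mathcal{F}_{\mathrm{C}}$. Aggregation filters $F_k$ are low-pass filters and comparison filters $F_{k_1,k_2}$ are band-pass (diffusion-wavelet) filters. For $\mathbf{x}\in\mathbb{R}^n$, $\mathbf{h}_f[v]$ denotes the entry of $\mathbf{h}_f$ at vertex $v$. *)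

theory Defs
  imports "HOL-Analysis.Analysis"
begin

definition simple_adj :: "real^'n^'n \<Rightarrow> bool" where
  "simple_adj A \<longleftrightarrow> (\<forall>i j. A$i$j = 0 \<or> A$i$j = 1) \<and> (\<forall>i j. A$i$j = A$j$i) \<and> (\<forall>i. A$i$i = 0)"

definition graph_connected :: "real^'n^'n \<Rightarrow> bool" where
  "graph_connected A \<longleftrightarrow> (\<forall>i j. (\<lambda>a b. A$a$b = 1)\<^sup>*\<^sup>* i j)"

definition degree_vec :: "real^'n^'n \<Rightarrow> real^'n" where
  "degree_vec A = A *v 1"

definition degree_mat :: "real^'n^'n \<Rightarrow> real^'n^'n" where
  "degree_mat A = (\<chi> i j. if i = j then degree_vec A $ i else 0)"

definition lazy_walk :: "real^'n^'n \<Rightarrow> real^'n^'n" where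
  "lazy_walk A = (1/2) *\<^sub>R (mat 1 + A ** matrix_inv (degree_mat A))"

datatype filt = Agg nat | Comp nat nat

definition is_agg :: "filt \<Rightarrow> bool" where
  "is_agg f \<longleftrightarrow> (\<exists>k. f = Agg k)"

definition is_comp :: "filt \<Rightarrow> bool" where
  "is_comp f \<longleftrightarrow> (\<exists>k1 k2. f = Comp k1 k2)"

definition walk_pow :: "real^'n^'n \<Rightarrow> nat \<Rightarrow> real^'n \<Rightarrow> real^'n" where
  "walk_pow P k x = ((\<lambda>y. P *v y) ^^ k) x"

text \<open>Filter response h_f = f(x) (non-decoupled: no learned map afterwards).\<close>
fun filt_resp :: "real^'n^'n \<Rightarrow> real^'n \<Rightarrow> filt \<Rightarrow> real^'n" where
  "filt_resp P x (Agg k) = walk_pow P k x"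
| "filt_resp P x (Comp k1 k2) = walk_pow P k1 x - walk_pow P k2 x"

end

theory Submission
  imports Defs
begin

text \<open>Conjugating the lazy walk by the degree matrix gives the averaging operator
  \<open>Q g = (g + D\<^sup>-\<^sup>1 A g) / 2\<close>, i.e. \<open>P (D g) = D (Q g)\<close>. The maxima of \<open>Q\<^sup>k g\<close>
  decrease, and by the maximum principle on the connected graph every subsequential limit of
  \<open>Q\<^sup>k g\<close> is constant; so \<open>Q\<^sup>k g\<close> converges to a constant, which the conserved
  quantity \<open>\<Sum>\<^sub>i d\<^sub>i g\<^sub>i\<close> identifies. Hence \<open>(P\<^sup>k x)[v] \<longrightarrow> d\<^sub>v \<Sum>x / \<Sum>d\<close>, which is
  positive for nonzero \<open>x \<ge> 0\<close>. For large \<open>K\<close> every aggregation response at \<open>v\<close> is at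
  least half this limit, while every comparison response, a difference of two values near the
  limit, is tiny; as there are at most \<open>N\<close> comparison filters, each weighted by at most \<open>c\<close>
  times the largest aggregation weight, the comparison sum is at most \<open>\<epsilon> c\<close> times the
  aggregation sum.\<close>

lemma degree_vec_nth: "degree_vec A $ i = (\<Sum>j\<in>UNIV. A$i$j)"
  by (simp add: degree_vec_def matrix_vector_mult_def)

lemma matrix_inv_degree_mat:
  assumes "\<And>i. degree_vec A $ i \<noteq> 0"
  shows "matrix_inv (degree_mat A) = (\<chi> i j. if i = j then 1 / degree_vec A $ i else 0)"
    (is "_ = ?Dinv")
proof -
  have inv: "degree_mat A ** ?Dinv = mat 1" "?Dinv ** degree_mat A = mat 1"
    using assms by (auto simp: matrix_matrix_mult_def degree_mat_def mat_def vec_eq_iff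
        if_distrib[of "\<lambda>t. t * _"] cong: if_cong)
  then have "degree_mat A ** matrix_inv (degree_mat A) = mat 1 \<and>
      matrix_inv (degree_mat A) ** degree_mat A = mat 1"
    unfolding matrix_inv_def by (rule someI[of _ ?Dinv, OF conjI])
  then have "matrix_inv (degree_mat A) = matrix_inv (degree_mat A) ** (degree_mat A ** ?Dinv)"
    by (simp add: inv matrix_mul_rid)
  also have "\<dots> = ?Dinv"
    by (simp add: matrix_mul_assoc \<open>_ \<and> _\<close> matrix_mul_lid)
  finally show ?thesis .
qed

lemma lazy_walk_mult_vec:
  assumes "\<And>i. degree_vec A $ i \<noteq> 0"
  shows "lazy_walk A *v y = (\<chi> i. y$i/2 + (\<Sum>j\<in>UNIV. A$i$j * y$j / degree_vec A $ j)/2)"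
proof -
  have "lazy_walk A *v y = (1/2) *\<^sub>R (y + A *v (matrix_inv (degree_mat A) *v y))"
    unfolding lazy_walk_def
    by (simp flip: scaleR_matrix_vector_assoc
        add: matrix_vector_mult_add_rdistrib matrix_vector_mul_lid matrix_vector_mul_assoc)
  also have "matrix_inv (degree_mat A) *v y = (\<chi> j. y$j / degree_vec A $ j)"
    by (simp add: matrix_inv_degree_mat assms matrix_vector_mult_def vec_eq_iff
        if_distrib[of "\<lambda>t. t * _"] cong: if_cong)
  also have "(1/2) *\<^sub>R (y + A *v (\<chi> j. y$j / degree_vec A $ j))
      = (\<chi> i. y$i/2 + (\<Sum>j\<in>UNIV. A$i$j * y$j / degree_vec A $ j)/2)"
    by (simp add: vec_eq_iff matrix_vector_mult_def)
  finally show ?thesis .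
qed

definition lazy_avg :: "real^'n^'n \<Rightarrow> real^'n \<Rightarrow> real^'n" where
  "lazy_avg A g = (\<chi> i. g$i/2 + (\<Sum>j\<in>UNIV. A$i$j * g$j) / (2 * degree_vec A $ i))"

lemma lazy_avg_uminus: "lazy_avg A (- g) = - lazy_avg A g"
  by (simp add: lazy_avg_def vec_eq_iff sum_negf)

lemma lazy_avg_pow_uminus: "(lazy_avg A ^^ k) (- g) = - (lazy_avg A ^^ k) g"
  by (induction k) (simp_all add: lazy_avg_uminus)

lemma lazy_avg_tendsto:
  assumes "(G \<longlongrightarrow> g) F"
  shows "((\<lambda>j. lazy_avg A (G j)) \<longlongrightarrow> lazy_avg A g) F"
  unfolding lazy_avg_def divide_inverse
  by (intro vec_tendstoI) (simp, intro tendsto_intros tendsto_vec_nth assms, simp_all)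

lemma lazy_avg_pow_tendsto:
  assumes "(G \<longlongrightarrow> g) F"
  shows "((\<lambda>j. (lazy_avg A ^^ k) (G j)) \<longlongrightarrow> (lazy_avg A ^^ k) g) F"
  by (induction k) (simp_all add: assms lazy_avg_tendsto)

lemma rtranclp_bounded_relpowp:
  fixes r :: "'a::finite \<Rightarrow> 'a \<Rightarrow> bool"
  shows "\<exists>L. \<forall>i w. r\<^sup>*\<^sup>* i w \<longrightarrow> (\<exists>l\<le>L. (r ^^ l) i w)"
proof -
  define len where "len p = (LEAST l. (r ^^ l) (fst p) (snd p))" for p
  have "(r ^^ len (i, w)) i w" if "r\<^sup>*\<^sup>* i w" for i w
    unfolding len_def using rtranclp_imp_relpowp[OF that] by (auto intro: LeastI_ex)
  moreover have "len (i, w) \<le> Max (range len)" for i w by (rule Max_ge) auto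
  ultimately show ?thesis by blast
qed

locale weighted_graph =
  fixes A :: "real^'n^'n"
  assumes weight_nonneg: "\<And>i j. 0 \<le> A$i$j"
    and degree_pos: "\<And>i. 0 < degree_vec A $ i"
begin

abbreviation adj :: "'n \<Rightarrow> 'n \<Rightarrow> bool" where
  "adj i j \<equiv> 0 < A$i$j"

lemma weighted_sum_le:
  assumes "\<And>j. g$j \<le> M"
  shows "(\<Sum>j\<in>UNIV. A$i$j * g$j) \<le> degree_vec A $ i * M"
proof -
  have "(\<Sum>j\<in>UNIV. A$i$j * g$j) \<le> (\<Sum>j\<in>UNIV. A$i$j * M)"
    by (intro sum_mono mult_left_mono assms weight_nonneg)
  then show ?thesis by (simp add: degree_vec_nth sum_distrib_right)
qed

lemma lazy_avg_le:
  assumes "\<And>j. g$j \<le> M"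
  shows "lazy_avg A g $ i \<le> M"
proof -
  have "(\<Sum>j\<in>UNIV. A$i$j * g$j) / (2 * degree_vec A $ i) \<le> M/2"
    using weighted_sum_le[OF assms, of i] degree_pos[of i] by (simp add: divide_simps mult.commute)
  then show ?thesis using assms[of i] by (simp add: lazy_avg_def)
qed

lemma lazy_avg_eq_max:
  assumes le: "\<And>j. g$j \<le> M" and eq: "lazy_avg A g $ i = M"
  shows "g$i = M" and "adj i u \<Longrightarrow> g$u = M"
proof -
  have "(\<Sum>j\<in>UNIV. A$i$j * g$j) / (2 * degree_vec A $ i) \<le> M/2"
    using weighted_sum_le[OF le, of i] degree_pos[of i] by (simp add: divide_simps mult.commute)
  with eq le[of i] show gi: "g$i = M" by (simp add: lazy_avg_def)
  with eq have "(\<Sum>j\<in>UNIV. A$i$j * g$j) = degree_vec A $ i * M"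
    using degree_pos[of i] by (simp add: lazy_avg_def divide_simps)
  then have "(\<Sum>j\<in>UNIV. A$i$j * (M - g$j)) = 0"
    by (simp add: right_diff_distrib sum_subtractf degree_vec_nth sum_distrib_right)
  then have "A$i$u * (M - g$u) = 0"
    by (subst (asm) sum_nonneg_eq_0_iff) (auto intro: mult_nonneg_nonneg weight_nonneg simp: le)
  then show "adj i u \<Longrightarrow> g$u = M" by simp
qed

lemma lazy_avg_pow_le:
  assumes "\<And>j. g$j \<le> M"
  shows "(lazy_avg A ^^ k) g $ i \<le> M"
  using assms by (induction k arbitrary: i) (simp_all add: lazy_avg_le)

lemma lazy_avg_pow_ge:
  assumes "\<And>j. m \<le> g$j"
  shows "m \<le> (lazy_avg A ^^ k) g $ i"
  using lazy_avg_pow_le[of "- g" "- m" k i] assms by (simp add: lazy_avg_pow_uminus)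

lemma lazy_avg_pow_eq_max:
  assumes "\<And>j. g$j \<le> M" and "(lazy_avg A ^^ k) g $ i = M" and "l \<le> k" and "(adj ^^ l) i w"
  shows "g$w = M"
  using assms(2-)
proof (induction k arbitrary: i l)
  case (Suc k)
  have le: "\<And>j. (lazy_avg A ^^ k) g $ j \<le> M" by (rule lazy_avg_pow_le[OF assms(1)])
  have eq: "lazy_avg A ((lazy_avg A ^^ k) g) $ i = M" using Suc.prems(1) by simp
  show ?case
  proof (cases l)
    case 0
    then show ?thesis using Suc.IH[of i 0] lazy_avg_eq_max(1)[OF le eq] Suc.prems by simp
  next
    case (Suc l')
    then obtain u where "adj i u" "(adj ^^ l') u w"
      using relpowp_Suc_D2[where P=adj and n=l'] Suc.prems(3) \<open>l = Suc l'\<close> by auto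
    then show ?thesis
      using Suc.IH[of u l'] lazy_avg_eq_max(2)[OF le eq] Suc.prems(2) \<open>l = Suc l'\<close> by simp
  qed
qed simp

lemma max_lazy_avg_pow_tendsto:
  obtains Lm where "(\<lambda>k. Max (range (vec_nth ((lazy_avg A ^^ k) g)))) \<longlonglongrightarrow> Lm"
    and "\<And>k. Lm \<le> Max (range (vec_nth ((lazy_avg A ^^ k) g)))"
proof -
  define Mx where "Mx k = Max (range (vec_nth ((lazy_avg A ^^ k) g)))" for k
  have "decseq Mx"
  proof (rule decseq_SucI)
    fix k
    have "(lazy_avg A ^^ k) g $ j \<le> Mx k" for j unfolding Mx_def by (rule Max_ge) auto
    then have "(lazy_avg A ^^ Suc k) g $ i \<le> Mx k" for i by (simp add: lazy_avg_le)
    then show "Mx (Suc k) \<le> Mx k" unfolding Mx_def[of "Suc k"] by (subst Max_le_iff) auto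
  qed
  moreover have "- norm g \<le> Mx k" for k
  proof -
    have "- norm g \<le> g $ j" for j using component_le_norm_cart[of g j] by (simp add: abs_le_iff)
    then have "- norm g \<le> (lazy_avg A ^^ k) g $ i" for i by (rule lazy_avg_pow_ge)
    then show ?thesis by (simp add: Mx_def Max_ge_iff)
  qed
  ultimately obtain Lm where "Mx \<longlonglongrightarrow> Lm" "\<forall>k. Lm \<le> Mx k"
    by (metis decseq_convergent)
  then show ?thesis using that unfolding Mx_def by blast
qed

text \<open>Applying \<open>L\<close> more steps to a subsequential limit gives a vector bounded by \<open>Lm\<close>
  that attains \<open>Lm\<close>, because the maxima along the subsequence never drop below \<open>Lm\<close>; the
  maximum principle then spreads the value \<open>Lm\<close> back over all vertices within \<open>L\<close> steps.\<close>
lemma lazy_avg_pow_subseq_limit_const: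
  assumes L: "\<And>i w. \<exists>l\<le>L. (adj ^^ l) i w" and r: "strict_mono r"
    and lim: "(\<lambda>j. (lazy_avg A ^^ r j) g) \<longlonglongrightarrow> gs"
    and Mx: "(\<lambda>k. Max (range (vec_nth ((lazy_avg A ^^ k) g)))) \<longlonglongrightarrow> Lm"
    and Lm: "\<And>k. Lm \<le> Max (range (vec_nth ((lazy_avg A ^^ k) g)))"
  shows "gs $ w = Lm"
proof -
  define G where "G k = (lazy_avg A ^^ k) g" for k
  have shifted: "(\<lambda>j. G (r j + t)) \<longlonglongrightarrow> (lazy_avg A ^^ t) gs" for t
    using lazy_avg_pow_tendsto[OF lim, of t] by (simp add: G_def funpow_add add.commute)
  have "strict_mono (\<lambda>j. r j + t)" for t using r by (simp add: strict_mono_def)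
  from LIMSEQ_subseq_LIMSEQ[OF Mx this]
  have Mx_shifted: "(\<lambda>j. Max (range (vec_nth (G (r j + t))))) \<longlonglongrightarrow> Lm" for t
    by (simp add: o_def G_def)
  have le: "(lazy_avg A ^^ t) gs $ i \<le> Lm" for t i
    by (rule tendsto_le[OF _ Mx_shifted[of t] tendsto_vec_nth[OF shifted]]) auto
  have "\<exists>i. (lazy_avg A ^^ L) gs $ i = Lm"
  proof (rule ccontr)
    assume "\<not> ?thesis"
    then have "\<forall>i. (lazy_avg A ^^ L) gs $ i < Lm" using le[of L] by (simp add: order_less_le)
    then have "\<forall>\<^sub>F j in sequentially. \<forall>i. G (r j + L) $ i < Lm"
      by (intro eventually_all_finite allI order_tendstoD(2)[OF tendsto_vec_nth[OF shifted]]) auto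
    then obtain j where below: "\<forall>i. G (r j + L) $ i < Lm" by (auto simp: eventually_sequentially)
    have "Max (range (vec_nth (G (r j + L)))) \<in> range (vec_nth (G (r j + L)))"
      by (rule Max_in) auto
    then obtain i where "Max (range (vec_nth (G (r j + L)))) = G (r j + L) $ i" by (rule rangeE)
    moreover have "G (r j + L) $ i < Lm" using below by blast
    moreover have "Lm \<le> Max (range (vec_nth (G (r j + L))))" using Lm unfolding G_def by blast
    ultimately show False by linarith
  qed
  then obtain i where "(lazy_avg A ^^ L) gs $ i = Lm" ..
  moreover obtain l where "l \<le> L" "(adj ^^ l) i w" using L by blast
  ultimately show ?thesis using lazy_avg_pow_eq_max[of gs Lm] le[of 0] by simp
qed

lemma lazy_avg_pow_convergent:
  assumes connected: "\<And>i w. adj\<^sup>*\<^sup>* i w"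
  shows "\<exists>Lm. \<forall>i. (\<lambda>k. (lazy_avg A ^^ k) g $ i) \<longlonglongrightarrow> Lm"
proof -
  obtain L where L: "\<And>i w. \<exists>l\<le>L. (adj ^^ l) i w"
    using rtranclp_bounded_relpowp[of adj] connected by blast
  define G where "G k = (lazy_avg A ^^ k) g" for k
  have bnd: "- norm g \<le> g $ j" "g $ j \<le> norm g" for j
    using component_le_norm_cart[of g j] by (simp_all add: abs_le_iff)
  have "\<bar>G k $ i\<bar> \<le> norm g" for k i
    using lazy_avg_pow_le[OF bnd(2)] lazy_avg_pow_ge[OF bnd(1)] by (simp add: G_def abs_le_iff minus_le_iff)
  then have "norm (G k) \<le> CARD('n) * norm g" for k
    using norm_le_l1_cart[of "G k"] sum_mono[of UNIV "\<lambda>i. \<bar>G k $ i\<bar>" "\<lambda>_. norm g"] by simp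
  then have "bounded (range G)" unfolding bounded_iff by blast
  then obtain gs r where r: "strict_mono r" and "(G \<circ> r) \<longlonglongrightarrow> gs"
    using bounded_imp_convergent_subsequence by blast
  then have lim: "(\<lambda>j. (lazy_avg A ^^ r j) g) \<longlonglongrightarrow> gs"
    and lim_neg: "(\<lambda>j. (lazy_avg A ^^ r j) (- g)) \<longlonglongrightarrow> - gs"
    by (simp_all add: o_def G_def lazy_avg_pow_uminus tendsto_minus)
  obtain Lm where Mx: "(\<lambda>k. Max (range (vec_nth (G k)))) \<longlonglongrightarrow> Lm"
    and "\<And>k. Lm \<le> Max (range (vec_nth (G k)))"
    using max_lazy_avg_pow_tendsto[of g] unfolding G_def by blast
  with lazy_avg_pow_subseq_limit_const[OF L r lim] have gs: "\<And>w. gs $ w = Lm"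
    unfolding G_def by blast
  define Mx' where "Mx' k = Max (range (vec_nth ((lazy_avg A ^^ k) (- g))))" for k
  obtain Lm' where Mx': "Mx' \<longlonglongrightarrow> Lm'" and "\<And>k. Lm' \<le> Mx' k"
    using max_lazy_avg_pow_tendsto[of "- g"] unfolding Mx'_def by blast
  with lazy_avg_pow_subseq_limit_const[OF L r lim_neg] have gs': "\<And>w. - gs $ w = Lm'"
    unfolding Mx'_def by simp
  show ?thesis
  proof (intro exI allI)
    fix i
    have lower: "- Mx' k \<le> G k $ i" for k
    proof -
      have "(lazy_avg A ^^ k) (- g) $ i \<le> Mx' k" unfolding Mx'_def by (rule Max_ge) auto
      then show ?thesis by (simp add: G_def lazy_avg_pow_uminus)
    qed
    have upper: "G k $ i \<le> Max (range (vec_nth (G k)))" for k by (rule Max_ge) auto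
    have lim_lower: "(\<lambda>k. - Mx' k) \<longlonglongrightarrow> Lm"
    proof -
      have "- Lm' = Lm" using gs[of i] gs'[of i] by simp
      then show ?thesis using tendsto_minus[OF Mx'] by simp
    qed
    have "(\<lambda>k. G k $ i) \<longlonglongrightarrow> Lm"
      by (rule tendsto_sandwich[OF _ _ lim_lower Mx]) (auto intro: always_eventually lower upper)
    then show "(\<lambda>k. (lazy_avg A ^^ k) g $ i) \<longlonglongrightarrow> Lm" by (simp add: G_def)
  qed
qed

lemma lazy_avg_degree_sum:
  assumes sym: "\<And>i j. A$i$j = A$j$i"
  shows "(\<Sum>i\<in>UNIV. degree_vec A $ i * lazy_avg A g $ i) = (\<Sum>i\<in>UNIV. degree_vec A $ i * g $ i)"
proof -
  have "degree_vec A $ i * lazy_avg A g $ i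
      = degree_vec A $ i * g$i / 2 + (\<Sum>j\<in>UNIV. A$i$j * g$j) / 2" for i
    using degree_pos[of i] by (simp add: lazy_avg_def distrib_left)
  then have "(\<Sum>i\<in>UNIV. degree_vec A $ i * lazy_avg A g $ i)
      = (\<Sum>i\<in>UNIV. degree_vec A $ i * g$i) / 2 + (\<Sum>i\<in>UNIV. \<Sum>j\<in>UNIV. A$i$j * g$j) / 2"
    by (simp add: sum.distrib sum_divide_distrib)
  also have "(\<Sum>i\<in>UNIV. \<Sum>j\<in>UNIV. A$i$j * g$j) = (\<Sum>j\<in>UNIV. degree_vec A $ j * g$j)"
    by (subst sum.swap) (simp add: sym degree_vec_nth sum_distrib_right)
  finally show ?thesis by simp
qed

lemma lazy_avg_pow_degree_sum:
  assumes "\<And>i j. A$i$j = A$j$i"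
  shows "(\<Sum>i\<in>UNIV. degree_vec A $ i * (lazy_avg A ^^ k) g $ i) = (\<Sum>i\<in>UNIV. degree_vec A $ i * g $ i)"
  by (induction k) (simp_all add: lazy_avg_degree_sum[OF assms])

lemma lazy_walk_mult_degree_scaled:
  "lazy_walk A *v (\<chi> i. degree_vec A $ i * g $ i) = (\<chi> i. degree_vec A $ i * lazy_avg A g $ i)"
  using degree_pos by (simp add: lazy_walk_mult_vec less_imp_neq[symmetric] lazy_avg_def vec_eq_iff
      distrib_left)

lemma walk_pow_lazy_walk:
  "walk_pow (lazy_walk A) k x
     = (\<chi> i. degree_vec A $ i * (lazy_avg A ^^ k) (\<chi> j. x$j / degree_vec A $ j) $ i)"
proof (induction k)
  case 0
  show ?case using degree_pos by (simp add: walk_pow_def vec_eq_iff less_imp_neq[symmetric])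
next
  case (Suc k)
  then show ?case by (simp add: walk_pow_def lazy_walk_mult_degree_scaled)
qed

end

lemma simple_adj_nonneg: "simple_adj A \<Longrightarrow> 0 \<le> A$i$j"
  unfolding simple_adj_def by (metis order_refl zero_le_one)

lemma simple_adj_degree_pos:
  fixes A :: "real^'n^'n"
  assumes "CARD('n) \<ge> 2" and "simple_adj A" and "graph_connected A"
  shows "0 < degree_vec A $ i"
proof -
  have "\<exists>j::'n. j \<noteq> i"
  proof (rule ccontr)
    assume "\<not> ?thesis"
    then have "UNIV = {i}" by auto
    then have "CARD('n) = card {i}" by (simp only:)
    then show False using assms(1) by simp
  qed
  then obtain j :: 'n where "j \<noteq> i" ..
  have "(\<lambda>a b. A$a$b = 1)\<^sup>*\<^sup>* i j" using assms(3) unfolding graph_connected_def by blast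
  then obtain u where "A$i$u = 1" using \<open>j \<noteq> i\<close> by (cases rule: converse_rtranclpE) auto
  moreover have "A$i$u \<le> (\<Sum>j\<in>UNIV. A$i$j)"
    using simple_adj_nonneg[OF assms(2)] by (intro member_le_sum) auto
  ultimately show ?thesis by (simp add: degree_vec_nth)
qed

lemma simple_adj_weighted_graph:
  fixes A :: "real^'n^'n"
  assumes "CARD('n) \<ge> 2" and "simple_adj A" and "graph_connected A"
  shows "weighted_graph A"
proof
  show "0 \<le> A$i$j" for i j by (rule simple_adj_nonneg[OF assms(2)])
  show "0 < degree_vec A $ i" for i by (rule simple_adj_degree_pos[OF assms])
qed

lemma lazy_walk_pow_tendsto:
  fixes A :: "real^'n^'n"
  assumes "CARD('n) \<ge> 2" and "simple_adj A" and "graph_connected A"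
  shows "(\<lambda>k. walk_pow (lazy_walk A) k x $ v)
           \<longlonglongrightarrow> degree_vec A $ v * (\<Sum>i\<in>UNIV. x$i) / (\<Sum>i\<in>UNIV. degree_vec A $ i)"
proof -
  interpret weighted_graph A by (rule simple_adj_weighted_graph[OF assms])
  define d where "d = degree_vec A"
  define G where "G k = (lazy_avg A ^^ k) (\<chi> j. x$j / d $ j)" for k
  have "(\<lambda>a b. A$a$b = 1)\<^sup>*\<^sup>* i w" for i w
    using assms(3) unfolding graph_connected_def by blast
  then have "adj\<^sup>*\<^sup>* i w" for i w by (rule rtranclp_mono[THEN predicate2D, rotated]) auto
  then obtain Lm where lim: "\<And>i. (\<lambda>k. G k $ i) \<longlonglongrightarrow> Lm"
    using lazy_avg_pow_convergent unfolding G_def by blast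
  have "(\<Sum>i\<in>UNIV. d $ i * G k $ i) = (\<Sum>i\<in>UNIV. x$i)" for k
    using assms(2) degree_pos unfolding G_def d_def simple_adj_def
    by (simp add: lazy_avg_pow_degree_sum less_imp_neq[symmetric])
  moreover have "(\<lambda>k. \<Sum>i\<in>UNIV. d $ i * G k $ i) \<longlonglongrightarrow> (\<Sum>i\<in>UNIV. d $ i * Lm)"
    by (intro tendsto_intros lim)
  ultimately have "(\<Sum>i\<in>UNIV. d $ i) * Lm = (\<Sum>i\<in>UNIV. x$i)"
    by (simp add: LIMSEQ_const_iff sum_distrib_right)
  moreover have "0 < (\<Sum>i\<in>UNIV. d $ i)"
    using degree_pos unfolding d_def by (simp add: sum_pos)
  ultimately have "Lm = (\<Sum>i\<in>UNIV. x$i) / (\<Sum>i\<in>UNIV. d $ i)" by (simp add: field_simps)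
  moreover have "walk_pow (lazy_walk A) k x $ v = d $ v * G k $ v" for k
    by (simp add: walk_pow_lazy_walk G_def d_def)
  ultimately show ?thesis using tendsto_mult_left[OF lim[of v], of "d $ v"] unfolding d_def by simp
qed

lemma walk_pow_zero: "walk_pow P k 0 = 0"
  by (induction k) (simp_all add: walk_pow_def)

lemma sum_mult_le_card_Max_mult:
  fixes s r :: "'a \<Rightarrow> real"
  assumes "finite C" and "\<And>f. f \<in> C \<Longrightarrow> 0 \<le> s f" and "\<And>f. f \<in> C \<Longrightarrow> r f \<le> \<delta>" and "0 \<le> \<delta>"
  shows "(\<Sum>f\<in>C. s f * r f) \<le> card C * (Max (insert 0 (s ` C)) * \<delta>)"
proof (rule sum_bounded_above)
  fix f assume "f \<in> C"
  have "s f * r f \<le> s f * \<delta>" using assms(2,3) \<open>f \<in> C\<close> by (simp add: mult_left_mono)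
  also have "\<dots> \<le> Max (insert 0 (s ` C)) * \<delta>"
    using assms(1,4) \<open>f \<in> C\<close> by (intro mult_right_mono Max_ge) auto
  finally show "s f * r f \<le> Max (insert 0 (s ` C)) * \<delta>" .
qed

lemma Max_mult_le_sum_mult:
  fixes s r :: "'a \<Rightarrow> real"
  assumes "finite C" and "\<And>f. f \<in> C \<Longrightarrow> 0 \<le> s f" and "\<And>f. f \<in> C \<Longrightarrow> b \<le> r f" and "0 \<le> b"
  shows "Max (insert 0 (s ` C)) * b \<le> (\<Sum>f\<in>C. s f * r f)"
proof -
  have term_ge: "s f * b \<le> s f * r f" if "f \<in> C" for f
    using assms(2,3) that by (simp add: mult_left_mono)
  have term_nonneg: "0 \<le> s f * r f" if "f \<in> C" for f
    using assms(2-4) that by (meson mult_nonneg_nonneg order_trans)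
  have "Max (insert 0 (s ` C)) \<in> insert 0 (s ` C)" using assms(1) by (intro Max_in) auto
  then show ?thesis
  proof
    assume "Max (insert 0 (s ` C)) = 0"
    then show ?thesis using term_nonneg by (simp add: sum_nonneg)
  next
    assume "Max (insert 0 (s ` C)) \<in> s ` C"
    then obtain f where f: "f \<in> C" "Max (insert 0 (s ` C)) = s f" by auto
    have "s f * b \<le> s f * r f" by (rule term_ge[OF f(1)])
    also have "\<dots> \<le> (\<Sum>f\<in>C. s f * r f)" using assms(1) f(1) term_nonneg by (intro member_le_sum) auto
    finally show ?thesis using f(2) by simp
  qed
qed

lemma band_dominant_bound:
  fixes P :: "real^'n^'n" and x :: "real^'n" and v :: 'n
  assumes lim: "(\<lambda>k. walk_pow P k x $ v) \<longlonglongrightarrow> a"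
    and "0 < a" and "0 < \<epsilon>" and "0 \<le> c"
  shows "\<exists>K::nat. \<forall>(F :: filt set) (s :: filt \<Rightarrow> real).
           finite F
         \<and> (\<forall>k. Agg k \<in> F \<longrightarrow> k \<ge> K)
         \<and> (\<forall>k1 k2. Comp k1 k2 \<in> F \<longrightarrow> k1 \<ge> K \<and> k2 \<ge> K)
         \<and> card {f\<in>F. is_comp f} \<le> N
         \<and> (\<forall>f\<in>F. s f \<ge> 0)
         \<and> Max (insert 0 (s ` {f\<in>F. is_comp f})) = c * Max (insert 0 (s ` {f\<in>F. is_agg f}))
         \<longrightarrow> (\<Sum>f\<in>{f\<in>F. is_comp f}. s f * filt_resp P x f $ v)
             \<le> \<epsilon> * c * (\<Sum>f\<in>{f\<in>F. is_agg f}. s f * filt_resp P x f $ v)"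
proof -
  define \<eta> where "\<eta> = min (a/2) (\<epsilon> * a / (4 * (N + 1)))"
  have "0 < \<eta>" using assms(2,3) by (simp add: \<eta>_def)
  have "\<eta> \<le> a/2" unfolding \<eta>_def by (rule min.cobounded1)
  have "4 * N * \<eta> \<le> 4 * (N + 1) * \<eta>" using \<open>0 < \<eta>\<close> by simp
  also have "\<dots> \<le> 4 * (N + 1) * (\<epsilon> * a / (4 * (N + 1)))"
    unfolding \<eta>_def by (intro mult_left_mono min.cobounded2) simp
  also have "\<dots> = \<epsilon> * a" by simp
  finally have \<eta>_small: "4 * N * \<eta> \<le> \<epsilon> * a" .
  obtain K where K: "\<And>k. K \<le> k \<Longrightarrow> \<bar>walk_pow P k x $ v - a\<bar> < \<eta>"
    using LIMSEQ_D[OF lim \<open>0 < \<eta>\<close>] by (metis real_norm_def)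
  show ?thesis
  proof (intro exI[of _ K] allI impI, elim conjE)
    fix F :: "filt set" and s :: "filt \<Rightarrow> real"
    define C where "C = {f\<in>F. is_comp f}"
    define Ag where "Ag = {f\<in>F. is_agg f}"
    assume "finite F" and K_agg: "\<forall>k. Agg k \<in> F \<longrightarrow> k \<ge> K"
      and K_comp: "\<forall>k1 k2. Comp k1 k2 \<in> F \<longrightarrow> k1 \<ge> K \<and> k2 \<ge> K"
      and "card {f\<in>F. is_comp f} \<le> N" and "\<forall>f\<in>F. s f \<ge> 0"
      and dominant: "Max (insert 0 (s ` {f\<in>F. is_comp f})) = c * Max (insert 0 (s ` {f\<in>F. is_agg f}))"
    have comp_resp: "filt_resp P x f $ v \<le> 2 * \<eta>" if f: "f \<in> C" for f
    proof -
      obtain k1 k2 where "f = Comp k1 k2" "K \<le> k1" "K \<le> k2"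
        using f K_comp unfolding C_def is_comp_def by blast
      then show ?thesis using K[of k1] K[of k2] by simp
    qed
    have agg_resp: "a/2 \<le> filt_resp P x f $ v" if f: "f \<in> Ag" for f
    proof -
      obtain k where "f = Agg k" "K \<le> k" using f K_agg unfolding Ag_def is_agg_def by blast
      then show ?thesis using K[of k] \<open>\<eta> \<le> a/2\<close> by simp
    qed
    have "Max (insert 0 (s ` C)) \<ge> 0" using \<open>finite F\<close> by (intro Max_ge) (auto simp: C_def)
    have "(\<Sum>f\<in>C. s f * filt_resp P x f $ v) \<le> card C * (Max (insert 0 (s ` C)) * (2 * \<eta>))"
      using \<open>finite F\<close> \<open>\<forall>f\<in>F. s f \<ge> 0\<close> \<open>0 < \<eta>\<close> comp_resp
      by (intro sum_mult_le_card_Max_mult) (auto simp: C_def)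
    also have "\<dots> \<le> N * (Max (insert 0 (s ` C)) * (2 * \<eta>))"
      using \<open>card {f\<in>F. is_comp f} \<le> N\<close> \<open>Max (insert 0 (s ` C)) \<ge> 0\<close> \<open>0 < \<eta>\<close>
      by (intro mult_right_mono) (simp_all add: C_def)
    also have "\<dots> = c * Max (insert 0 (s ` Ag)) * (2 * N * \<eta>)"
      using dominant by (simp add: C_def Ag_def)
    also have "\<dots> \<le> c * Max (insert 0 (s ` Ag)) * (\<epsilon> * a / 2)"
      using \<eta>_small \<open>Max (insert 0 (s ` C)) \<ge> 0\<close> dominant
      by (intro mult_left_mono) (simp_all add: C_def Ag_def)
    also have "\<dots> = \<epsilon> * c * (Max (insert 0 (s ` Ag)) * (a/2))" by simp
    also have "\<dots> \<le> \<epsilon> * c * (\<Sum>f\<in>Ag. s f * filt_resp P x f $ v)"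
      using \<open>finite F\<close> \<open>\<forall>f\<in>F. s f \<ge> 0\<close> agg_resp assms(2-4)
      by (intro mult_left_mono Max_mult_le_sum_mult) (auto simp: Ag_def)
    finally show "(\<Sum>f\<in>{f\<in>F. is_comp f}. s f * filt_resp P x f $ v)
        \<le> \<epsilon> * c * (\<Sum>f\<in>{f\<in>F. is_agg f}. s f * filt_resp P x f $ v)"
      unfolding C_def Ag_def .
  qed
qed

theorem theorem1:
  fixes A :: "real^'n^'n" and x :: "real^'n" and v :: 'n
    and c \<epsilon> :: real and N :: nat
  assumes "CARD('n) \<ge> 2"
    and "simple_adj A" and "graph_connected A"
    and "\<forall>i. x $ i \<ge> 0"
    and "c > 1" and "N \<ge> 1" and "\<epsilon> > 0"
  shows "\<exists>K::nat. \<forall>(F :: filt set) (s :: filt \<Rightarrow> real).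
           finite F \<and> F \<noteq> {}
         \<and> (\<forall>k. Agg k \<in> F \<longrightarrow> k \<ge> K)
         \<and> (\<forall>k1 k2. Comp k1 k2 \<in> F \<longrightarrow> k1 \<noteq> k2 \<and> k1 \<ge> K \<and> k2 \<ge> K)
         \<and> card {f\<in>F. is_comp f} \<le> N
         \<and> (\<forall>f\<in>F. s f \<ge> 0)
         \<and> Max (insert 0 (s ` {f\<in>F. is_comp f})) = c * Max (insert 0 (s ` {f\<in>F. is_agg f}))
         \<longrightarrow> (\<Sum>f\<in>{f\<in>F. is_comp f}. s f * filt_resp (lazy_walk A) x f $ v)
             \<le> \<epsilon> * c * (\<Sum>f\<in>{f\<in>F. is_agg f}. s f * filt_resp (lazy_walk A) x f $ v)"
proof (cases "x = 0")
  case True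
  then have "filt_resp (lazy_walk A) x f = 0" for f by (cases f) (simp_all add: walk_pow_zero)
  then show ?thesis by simp
next
  case False
  then obtain j where "0 < x $ j" using assms(4) by (metis order_less_le vec_eq_iff zero_index)
  then have "0 < (\<Sum>i\<in>UNIV. x $ i)" using assms(4) by (intro sum_pos2) auto
  moreover have "0 < degree_vec A $ i" for i by (rule simple_adj_degree_pos[OF assms(1-3)])
  ultimately have limit_pos:
    "0 < degree_vec A $ v * (\<Sum>i\<in>UNIV. x$i) / (\<Sum>i\<in>UNIV. degree_vec A $ i)"
    by (simp add: sum_pos)
  have "0 \<le> c" using \<open>c > 1\<close> by simp
  from band_dominant_bound[OF lazy_walk_pow_tendsto[OF assms(1-3)] limit_pos \<open>\<epsilon> > 0\<close> this, of N]
  show ?thesis by (elim exE) (rule exI, blast)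
qed

end
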